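(* Let $T=(V,E)$ be a temporal bipartite graph, let $\tau>0$, let $i\in\{1,\dots,6\}$ and let $p\in(0,1)$. Let $\widehat{C}_i$ be the estimator produced by either \texttt{TBC-E} or \texttt{TBC-N} (both with sampling probability $p$), as described in the context. Then $\mathbb{E}[\widehat{C}_i]=C_i$ and $\operatorname{Var}[\widehat{C}_i]\le \frac{1-p}{p}\,C_i^2$.
   Context: A temporal bipartite graph $T=(V,E)$ has node set $V=U\cup L$ with $U\cap L=\emptyset$ and a finite (multi)set $E\subseteq U\times L\times\mathbb{R}^+$ of temporal edges $(u,l,t)$ (several edges may join the same pair $u,l$ at different times); $m=|E|$. A temporal butterfly $B_i$ ($i=1,\dots,6$) is the butterfly on nodes $u'_1,u'_2\in U$-side and $l'_1,l'_2\in L$-side with edges $(u'_1,l'_1),(u'_2,l'_1),(u'_1,l'_2),(u'_2,l'_2)$ together with an ordering $\sigma_i$ of these four edges; $\sigma_1,\dots,\sigma_6$ are the six orderings in which $(u'_1,l'_1)$ comes first (a fixed enumeration of the permutations of the remaining three edges). Given $\tau>0$, a set $S$ of four temporal edges $\{(u_x,l_x,t_1),(u_y,l_x,t_2),(u_x,l_y,t_3),(u_y,l_y,t_4)\}$ of $T$ with $u_x\ne u_y\in U$, $l_x\ne l_y\in L$ is a $\tau$-instance of $B_i$ if, under the map $u_x\mapsto u'_1,u_y\mapsto u'_2,l_x\mapsto l'_1,l_y\mapsto l'_2$, the order of the four edges by timestamp matches $\sigma_i$ (so $(u_x,l_x,t_1)$ has the smallest timestamp), and $\max_{j\in\{2,3,4\}}t_j-t_1\le\tau$.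 $C_i$ denotes the number of $\tau$-instances of $B_i$ in $T$, and for an edge $e\in E$, $C_i(e)$ denotes the number of $\tau$-instances of $B_i$ whose first (smallest-timestamp) edge is $e$, so that $\sum_{e\in E}C_i(e)=C_i$. Algorithm \texttt{TBC-E}: each edge $e\in E$ is put into a sample $\widehat{E}$ independently with probability $p$, and the output is $\widehat{C}_i=\sum_{e\in\widehat{E}}C_i(e)/p$. Algorithm \texttt{TBC-N}: each node $u\in U$ is put into a sample $\widehat{U}$ independently with probability $p$ (the same construction may alternatively be applied to $L$), $\widehat{E}$ is the set of all edges incident to a node of $\widehat{U}$, and the output is $\widehat{C}_i=\sum_{e\in\widehat{E}}C_i(e)/p$. *)

theory Defs
  imports "HOL-Probability.Probability"
begin

text \<open>A temporal bipartite graph: edges are identified by elements of a finite set E of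
edge identifiers (so parallel edges with equal (u,l,t) are allowed, i.e. E is a multiset);
eu e \<in> U, el e \<in> L and et e > 0 are the endpoints and timestamp of edge e.
Edge positions in a butterfly: 0 = (u1,l1), 1 = (u2,l1), 2 = (u1,l2), 3 = (u2,l2).\<close>

definition sigmas :: "nat list list" where
  "sigmas = [[0,1,2,3],[0,1,3,2],[0,2,1,3],[0,2,3,1],[0,3,1,2],[0,3,2,1]]"

definition sigma :: "nat \<Rightarrow> nat list" where
  "sigma i = sigmas ! (i - 1)"

fun is_inst :: "('e \<Rightarrow> 'u) \<Rightarrow> ('e \<Rightarrow> 'l) \<Rightarrow> ('e \<Rightarrow> real) \<Rightarrow> 'e set \<Rightarrow> real \<Rightarrow> nat
    \<Rightarrow> 'e \<times> 'e \<times> 'e \<times> 'e \<Rightarrow> bool" where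
  "is_inst eu el et E tau i (e1, e2, e3, e4) \<longleftrightarrow>
     e1 \<in> E \<and> e2 \<in> E \<and> e3 \<in> E \<and> e4 \<in> E \<and>
     eu e1 = eu e3 \<and> eu e2 = eu e4 \<and> el e1 = el e2 \<and> el e3 = el e4 \<and>
     eu e1 \<noteq> eu e2 \<and> el e1 \<noteq> el e3 \<and>
     sorted_wrt (<) (map (\<lambda>j. et ([e1, e2, e3, e4] ! j)) (sigma i)) \<and>
     (\<forall>e \<in> {e2, e3, e4}. et e - et e1 \<le> tau)"

definition count_C :: "('e \<Rightarrow> 'u) \<Rightarrow> ('e \<Rightarrow> 'l) \<Rightarrow> ('e \<Rightarrow> real) \<Rightarrow> 'e set \<Rightarrow> real \<Rightarrow> nat \<Rightarrow> nat" where
  "count_C eu el et E tau i = card {q. is_inst eu el et E tau i q}"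

definition count_Ce :: "('e \<Rightarrow> 'u) \<Rightarrow> ('e \<Rightarrow> 'l) \<Rightarrow> ('e \<Rightarrow> real) \<Rightarrow> 'e set \<Rightarrow> real \<Rightarrow> nat \<Rightarrow> 'e \<Rightarrow> nat" where
  "count_Ce eu el et E tau i e = card {q. is_inst eu el et E tau i q \<and> fst q = e}"

definition estimator :: "('e \<Rightarrow> 'u) \<Rightarrow> ('e \<Rightarrow> 'l) \<Rightarrow> ('e \<Rightarrow> real) \<Rightarrow> 'e set \<Rightarrow> real \<Rightarrow> nat \<Rightarrow> real
    \<Rightarrow> 'e set \<Rightarrow> real" where
  "estimator eu el et E tau i p Ehat = (\<Sum>e\<in>Ehat. real (count_Ce eu el et E tau i e)) / p"

definition sample_set :: "'a set \<Rightarrow> real \<Rightarrow> ('a \<Rightarrow> bool) pmf" where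
  "sample_set A p = Pi_pmf A False (\<lambda>_. bernoulli_pmf p)"

definition TBC_E :: "('e \<Rightarrow> 'u) \<Rightarrow> ('e \<Rightarrow> 'l) \<Rightarrow> ('e \<Rightarrow> real) \<Rightarrow> 'e set \<Rightarrow> real \<Rightarrow> nat \<Rightarrow> real
    \<Rightarrow> ('e \<Rightarrow> bool) \<Rightarrow> real" where
  "TBC_E eu el et E tau i p s = estimator eu el et E tau i p {e \<in> E. s e}"

text \<open>TBC-N: sampled nodes given by s over the node side; Ehat = edges incident to a sampled node
(node of edge e on the sampled side is side e).\<close>
definition TBC_N :: "('e \<Rightarrow> 'u) \<Rightarrow> ('e \<Rightarrow> 'l) \<Rightarrow> ('e \<Rightarrow> real) \<Rightarrow> 'e set \<Rightarrow> real \<Rightarrow> nat \<Rightarrow> real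
    \<Rightarrow> ('e \<Rightarrow> 'v) \<Rightarrow> ('v \<Rightarrow> bool) \<Rightarrow> real" where
  "TBC_N eu el et E tau i p side s = estimator eu el et E tau i p {e \<in> E. s (side e)}"

end

theory Submission
  imports Defs
begin

text \<open>Both estimators are Horvitz--Thompson estimators for independent Bernoulli(p) sampling
of units: edges for TBC-E, nodes of one side for TBC-N. Grouping the edges by their unit a and
letting W a be the sum of C_i(e) over the edges of a, the estimator is (1/p) \<Sum>_a [a sampled] W a,
and \<Sum>_a W a = C_i. Independence of the indicators gives expectation \<Sum>_a W a and variance
(1-p)/p \<Sum>_a (W a)^2, which is at most (1-p)/p (\<Sum>_a W a)^2 as the weights are nonnegative.\<close>

lemma expectation_prod_Pi_pmf_subset:
  fixes f :: "'a \<Rightarrow> 'b \<Rightarrow> real"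
  assumes "finite A" "B \<subseteq> A"
    and "\<And>x. x \<in> B \<Longrightarrow> integrable (measure_pmf (q x)) (f x)"
    and "\<And>x y. x \<in> B \<Longrightarrow> y \<in> set_pmf (q x) \<Longrightarrow> f x y \<ge> 0"
  shows "measure_pmf.expectation (Pi_pmf A d q) (\<lambda>s. \<Prod>x\<in>B. f x (s x))
       = (\<Prod>x\<in>B. measure_pmf.expectation (q x) (f x))"
proof -
  have "measure_pmf.expectation (Pi_pmf A d q) (\<lambda>s. \<Prod>x\<in>B. f x (s x))
      = measure_pmf.expectation (map_pmf (\<lambda>s x. if x \<in> B then s x else d) (Pi_pmf A d q))
          (\<lambda>s. \<Prod>x\<in>B. f x (s x))"
    by simp
  also have "\<dots> = measure_pmf.expectation (Pi_pmf B d q) (\<lambda>s. \<Prod>x\<in>B. f x (s x))"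
    by (simp only: Pi_pmf_subset[OF assms(1,2), symmetric])
  also have "\<dots> = (\<Prod>x\<in>B. measure_pmf.expectation (q x) (f x))"
    using assms by (intro expectation_prod_Pi_pmf) (auto dest: finite_subset)
  finally show ?thesis .
qed

lemma expectation_Pi_bernoulli_indicator:
  assumes "finite A" "a \<in> A" "0 \<le> p" "p \<le> 1"
  shows "measure_pmf.expectation (Pi_pmf A d (\<lambda>_. bernoulli_pmf p)) (\<lambda>s. of_bool (s a)) = p"
  using expectation_prod_Pi_pmf_subset[of A "{a}" "\<lambda>_. bernoulli_pmf p" "\<lambda>_. of_bool" d] assms
  by (simp add: integrable_measure_pmf_finite)

lemma expectation_Pi_bernoulli_indicator_pair:
  assumes "finite A" "a \<in> A" "b \<in> A" "0 \<le> p" "p \<le> 1"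
  shows "measure_pmf.expectation (Pi_pmf A d (\<lambda>_. bernoulli_pmf p))
           (\<lambda>s. of_bool (s a) * of_bool (s b)) = p\<^sup>2 + of_bool (a = b) * (p - p\<^sup>2)"
proof (cases "a = b")
  case True
  then have "(\<lambda>s. of_bool (s a) * of_bool (s b) :: real) = (\<lambda>s. of_bool (s a))"
    by auto
  then show ?thesis
    using expectation_Pi_bernoulli_indicator[OF assms(1,2,4,5)] True by simp
next
  case False
  then show ?thesis
    using expectation_prod_Pi_pmf_subset[of A "{a, b}" "\<lambda>_. bernoulli_pmf p" "\<lambda>_. of_bool" d] assms
    by (simp add: integrable_measure_pmf_finite power2_eq_square)
qed

lemma sum_power2_le_power2_sum:
  fixes w :: "'a \<Rightarrow> real"
  assumes "finite A" "\<And>a. a \<in> A \<Longrightarrow> w a \<ge> 0"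
  shows "(\<Sum>a\<in>A. (w a)\<^sup>2) \<le> (sum w A)\<^sup>2"
proof -
  have "(\<Sum>a\<in>A. (w a)\<^sup>2) \<le> (\<Sum>a\<in>A. w a * sum w A)"
    unfolding power2_eq_square using assms
    by (intro sum_mono mult_left_mono member_le_sum) auto
  also have "\<dots> = (sum w A)\<^sup>2"
    by (simp add: power2_eq_square sum_distrib_right)
  finally show ?thesis .
qed

lemma double_sum_const_plus_diagonal:
  fixes w :: "'a \<Rightarrow> 'b::comm_semiring_1"
  assumes "finite A"
  shows "(\<Sum>a\<in>A. \<Sum>b\<in>A. (\<alpha> + of_bool (a = b) * \<beta>) * (w a * w b))
       = \<alpha> * (sum w A)\<^sup>2 + \<beta> * (\<Sum>a\<in>A. (w a)\<^sup>2)"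
proof -
  have diagonal: "(\<Sum>b\<in>A. of_bool (a = b) * \<beta> * (w a * w b)) = \<beta> * (w a)\<^sup>2" if "a \<in> A" for a
  proof -
    have "(\<Sum>b\<in>A. of_bool (a = b) * \<beta> * (w a * w b)) = (\<Sum>b\<in>A. if a = b then \<beta> * (w a)\<^sup>2 else 0)"
      by (intro sum.cong) (auto simp: power2_eq_square)
    then show ?thesis
      using that assms by simp
  qed
  have "(\<Sum>a\<in>A. \<Sum>b\<in>A. \<alpha> * (w a * w b)) = \<alpha> * (sum w A)\<^sup>2"
    by (simp add: power2_eq_square sum_product sum_distrib_left mult_ac)
  with diagonal show ?thesis
    by (simp add: distrib_right sum.distrib sum_distrib_left mult.assoc)
qed

lemma
  fixes w :: "'a \<Rightarrow> real" and d :: bool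
  assumes fin: "finite A" and p: "0 < p" "p \<le> 1"
  defines "M \<equiv> Pi_pmf A d (\<lambda>_. bernoulli_pmf p)"
    and "X \<equiv> \<lambda>s. (\<Sum>a\<in>A. of_bool (s a) * w a) / p"
  shows expectation_Pi_bernoulli_weighted_sum: "measure_pmf.expectation M X = sum w A"
    and variance_Pi_bernoulli_weighted_sum:
      "measure_pmf.variance M X = (1 - p) / p * (\<Sum>a\<in>A. (w a)\<^sup>2)"
proof -
  have "finite (set_pmf M)"
    unfolding M_def using fin by (auto simp: set_Pi_pmf)
  then have int: "integrable (measure_pmf M) f" for f :: "_ \<Rightarrow> real"
    by (rule integrable_measure_pmf_finite)
  have "measure_pmf.expectation M X
      = (\<Sum>a\<in>A. measure_pmf.expectation M (\<lambda>s. of_bool (s a)) * w a) / p"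
    unfolding X_def by (simp add: int)
  also have "\<dots> = sum w A"
    using p fin by (simp add: M_def expectation_Pi_bernoulli_indicator sum_distrib_left[symmetric])
  finally show mean: "measure_pmf.expectation M X = sum w A" .
  have "(X s)\<^sup>2 = (\<Sum>a\<in>A. \<Sum>b\<in>A. of_bool (s a) * of_bool (s b) * (w a * w b)) / p\<^sup>2" for s
    unfolding X_def power2_eq_square by (simp add: sum_product algebra_simps)
  then have "measure_pmf.expectation M (\<lambda>s. (X s)\<^sup>2) = (\<Sum>a\<in>A. \<Sum>b\<in>A.
      measure_pmf.expectation M (\<lambda>s. of_bool (s a) * of_bool (s b)) * (w a * w b)) / p\<^sup>2"
    by (simp add: int)
  also have "\<dots> = (\<Sum>a\<in>A. \<Sum>b\<in>A. (p\<^sup>2 + of_bool (a = b) * (p - p\<^sup>2)) * (w a * w b)) / p\<^sup>2"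
    using p fin unfolding M_def
    by (intro arg_cong2[where f = "(/)"] sum.cong refl) (simp add: expectation_Pi_bernoulli_indicator_pair)
  also have "\<dots> = (p\<^sup>2 * (sum w A)\<^sup>2 + (p - p\<^sup>2) * (\<Sum>a\<in>A. (w a)\<^sup>2)) / p\<^sup>2"
    using fin by (simp only: double_sum_const_plus_diagonal)
  also have "\<dots> = (sum w A)\<^sup>2 + (1 - p) / p * (\<Sum>a\<in>A. (w a)\<^sup>2)"
    using p by (simp add: field_simps power2_eq_square)
  finally have "measure_pmf.expectation M (\<lambda>s. (X s)\<^sup>2)
      = (sum w A)\<^sup>2 + (1 - p) / p * (\<Sum>a\<in>A. (w a)\<^sup>2)" .
  then show "measure_pmf.variance M X = (1 - p) / p * (\<Sum>a\<in>A. (w a)\<^sup>2)"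
    using measure_pmf.variance_eq[of M X, OF int int] mean by simp
qed

lemma sum_filter_eq_sum_of_bool_groups:
  fixes c :: "'e \<Rightarrow> 'b::comm_semiring_1"
  assumes "finite E" "finite A" "side ` E \<subseteq> A"
  shows "(\<Sum>e\<in>{e \<in> E. s (side e)}. c e) = (\<Sum>a\<in>A. of_bool (s a) * (\<Sum>e\<in>{e \<in> E. side e = a}. c e))"
proof -
  have "(\<Sum>e\<in>{e \<in> E. s (side e)}. c e) = (\<Sum>e\<in>E. of_bool (s (side e)) * c e)"
    unfolding sum.inter_filter[OF assms(1)] by (intro sum.cong) auto
  also have "\<dots> = (\<Sum>a\<in>A. \<Sum>e\<in>{e \<in> E. side e = a}. of_bool (s (side e)) * c e)"
    using assms by (rule sum.group[symmetric])
  also have "\<dots> = (\<Sum>a\<in>A. of_bool (s a) * (\<Sum>e\<in>{e \<in> E. side e = a}. c e))"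
    by (simp add: sum_distrib_left)
  finally show ?thesis .
qed

lemma
  fixes c :: "'e \<Rightarrow> real" and side :: "'e \<Rightarrow> 'a"
  assumes finE: "finite E" and finA: "finite A" and side: "side ` E \<subseteq> A"
    and p: "0 < p" "p \<le> 1" and c: "\<And>e. e \<in> E \<Longrightarrow> c e \<ge> 0"
  defines "X \<equiv> \<lambda>s. (\<Sum>e\<in>{e \<in> E. s (side e)}. c e) / p"
  shows expectation_cluster_sample_estimator: "measure_pmf.expectation (sample_set A p) X = sum c E"
    and variance_cluster_sample_estimator_le:
      "measure_pmf.variance (sample_set A p) X \<le> (1 - p) / p * (sum c E)\<^sup>2"
proof -
  define w where "w a = (\<Sum>e\<in>{e \<in> E. side e = a}. c e)" for a
  have X: "X = (\<lambda>s. (\<Sum>a\<in>A. of_bool (s a) * w a) / p)"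
    unfolding X_def w_def using finE finA side by (simp add: sum_filter_eq_sum_of_bool_groups)
  have sum_w: "sum w A = sum c E"
    unfolding w_def using finE finA side by (rule sum.group)
  show "measure_pmf.expectation (sample_set A p) X = sum c E"
    unfolding X sample_set_def sum_w[symmetric]
    using finA p by (rule expectation_Pi_bernoulli_weighted_sum)
  have "measure_pmf.variance (sample_set A p) X = (1 - p) / p * (\<Sum>a\<in>A. (w a)\<^sup>2)"
    unfolding X sample_set_def using finA p by (rule variance_Pi_bernoulli_weighted_sum)
  also have "\<dots> \<le> (1 - p) / p * (sum c E)\<^sup>2"
    unfolding sum_w[symmetric] using p c finA
    by (intro mult_left_mono sum_power2_le_power2_sum) (auto simp: w_def intro: sum_nonneg)
  finally show "measure_pmf.variance (sample_set A p) X \<le> (1 - p) / p * (sum c E)\<^sup>2" .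
qed

lemma count_C_eq_sum_count_Ce:
  assumes "finite E"
  shows "count_C eu el et E tau i = (\<Sum>e\<in>E. count_Ce eu el et E tau i e)"
proof -
  let ?S = "{q. is_inst eu el et E tau i q}"
  have "finite ?S"
    by (rule finite_subset[of _ "E \<times> E \<times> E \<times> E"]) (auto simp: assms)
  moreover have "fst ` ?S \<subseteq> E"
    by auto
  ultimately have "card ?S = (\<Sum>e\<in>E. \<Sum>q\<in>{q \<in> ?S. fst q = e}. 1)"
    unfolding card_eq_sum using assms by (intro sum.group[symmetric])
  then show ?thesis
    unfolding count_C_def count_Ce_def by simp
qed

theorem theorem4p1:
  fixes E :: "'e set" and U :: "'u set" and L :: "'l set"
    and eu :: "'e \<Rightarrow> 'u" and el :: "'e \<Rightarrow> 'l" and et :: "'e \<Rightarrow> real"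
    and tau p :: real and i :: nat
  assumes finE: "finite E" and finU: "finite U" and finL: "finite L"
    and endU: "eu ` E \<subseteq> U" and endL: "el ` E \<subseteq> L"
    and tpos: "\<forall>e\<in>E. et e > 0"
    and tau: "tau > 0" and i: "i \<in> {1..6}" and p: "0 < p" "p < 1"
  defines "C \<equiv> real (count_C eu el et E tau i)"
  shows
    "measure_pmf.expectation (sample_set E p) (TBC_E eu el et E tau i p) = C
     \<and> measure_pmf.variance (sample_set E p) (TBC_E eu el et E tau i p) \<le> (1 - p) / p * C\<^sup>2
     \<and> measure_pmf.expectation (sample_set U p) (TBC_N eu el et E tau i p eu) = C
     \<and> measure_pmf.variance (sample_set U p) (TBC_N eu el et E tau i p eu) \<le> (1 - p) / p * C\<^sup>2
     \<and> measure_pmf.expectation (sample_set L p) (TBC_N eu el et E tau i p el) = C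
     \<and> measure_pmf.variance (sample_set L p) (TBC_N eu el et E tau i p el) \<le> (1 - p) / p * C\<^sup>2"
proof -
  let ?c = "\<lambda>e. real (count_Ce eu el et E tau i e)"
  have C: "C = sum ?c E"
    unfolding C_def count_C_eq_sum_count_Ce[OF finE] by simp
  have TBC_E: "TBC_E eu el et E tau i p = (\<lambda>s. (\<Sum>e\<in>{e \<in> E. s (id e)}. ?c e) / p)"
    by (simp add: TBC_E_def estimator_def fun_eq_iff)
  have TBC_N: "TBC_N eu el et E tau i p side = (\<lambda>s. (\<Sum>e\<in>{e \<in> E. s (side e)}. ?c e) / p)"
    for side :: "'e \<Rightarrow> 'v"
    by (simp add: TBC_N_def estimator_def fun_eq_iff)
  have "id ` E \<subseteq> E"
    by simp
  note cluster = expectation_cluster_sample_estimator variance_cluster_sample_estimator_le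
  show ?thesis
    unfolding C TBC_E TBC_N
    using cluster[OF finE finE \<open>id ` E \<subseteq> E\<close> p(1) less_imp_le[OF p(2)]]
      cluster[OF finE finU endU p(1) less_imp_le[OF p(2)]]
      cluster[OF finE finL endL p(1) less_imp_le[OF p(2)]]
    by simp
qed

end
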